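(* Let $H_m,H_{el}$ be finite groups with an action $(h,g)\mapsto h\cdot g$ of $H_{el}$ on $H_m$ satisfying $h\cdot(gg')=(h\cdot g)(h\cdot g')$, and let $\mathcal{A}=F(H_m)\times\mathbb{C}H_{el}$ be the modified quantum double, with elements written as functions in $F(H_m\times H_{el})$. Let $\alpha$ be an irreducible representation of $H_{el}$ on $V_\alpha$, let $\Pi^e_\alpha$ be the corresponding electric irreducible representation of $\mathcal{A}$ (orbit $\{e\}$, $g_A=e$, $N_A=H_{el}$), and let $|\phi_r\rangle$ be a vector in its carrier space. Let $N_{\phi_r}=\{h\in H_{el}:\Pi^e_\alpha(h)|\phi_r\rangle=|\phi_r\rangle\}$, where $h$ denotes $\sum_{g\in H_m}P_gh\in\mathcal{A}$. Then $\mathcal{T}_r:=\{a\in\mathcal{A}:(\mathrm{id}\otimes\Pi^e_\alpha)\Delta(a)(1\otimes|\phi_r\rangle)=a\otimes|\phi_r\rangle\}$ equals $F(H_m)\otimes\mathbb{C}N_{\phi_r}$, i.e. $f\in\mathcal{T}_r$ if and only if $f(x_1,y_1)=0$ for all $x_1\in H_m$ and all $y_1\notin N_{\phi_r}$.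
   Context: Modified quantum double: vector space $F(H_m)\otimes\mathbb{C}H_{el}$ with basis $P_gh$, identified with $F(H_m\times H_{el})$ via $P_gh\leftrightarrow\delta_g\otimes\delta_h$; $P_ghP_{g'}h'=\delta_{g,h\cdot g'}P_ghh'$, $\Delta(P_gh)=\sum_{g'\in H_m}P_{g'}h\otimes P_{g'^{-1}g}h$, $\varepsilon(P_gh)=\delta_{g,e}$, $S(P_gh)=P_{h^{-1}\cdot g^{-1}}h^{-1}$. The carrier space of $\Pi^e_\alpha$ is $\{|\phi\rangle:H_{el}\to V_\alpha\mid |\phi(xn)\rangle=\alpha(n^{-1})|\phi(x)\rangle\ \forall n\in H_{el}\}$, with action $(\Pi^e_\alpha(f)\phi)(x)=\sum_{z\in H_{el}}f(e,z)|\phi(z^{-1}x)\rangle$. *)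

theory Defs
  imports "HOL-Analysis.Analysis" "HOL-Algebra.Group"
begin

(* Elements of the modified quantum double A = F(H_m) (x) C H_el are represented as
   functions f :: 'a => 'b => complex, f g h = coefficient of P_g h, i.e. f = f(g,h)
   in F(H_m x H_el), vanishing outside carrier Hm x carrier Hel. *)

definition QD_elems :: "('a,'c) monoid_scheme \<Rightarrow> ('b,'d) monoid_scheme \<Rightarrow> ('a \<Rightarrow> 'b \<Rightarrow> complex) set" where
  "QD_elems Hm Hel = {f. \<forall>g h. (g \<notin> carrier Hm \<or> h \<notin> carrier Hel) \<longrightarrow> f g h = 0}"

definition is_aut_action :: "('a,'c) monoid_scheme \<Rightarrow> ('b,'d) monoid_scheme \<Rightarrow> ('b \<Rightarrow> 'a \<Rightarrow> 'a) \<Rightarrow> bool" where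
  "is_aut_action Hm Hel act \<longleftrightarrow>
     (\<forall>h\<in>carrier Hel. \<forall>g\<in>carrier Hm. act h g \<in> carrier Hm) \<and>
     (\<forall>g\<in>carrier Hm. act \<one>\<^bsub>Hel\<^esub> g = g) \<and>
     (\<forall>h\<in>carrier Hel. \<forall>h'\<in>carrier Hel. \<forall>g\<in>carrier Hm. act (h \<otimes>\<^bsub>Hel\<^esub> h') g = act h (act h' g)) \<and>
     (\<forall>h\<in>carrier Hel. \<forall>g\<in>carrier Hm. \<forall>g'\<in>carrier Hm.
        act h (g \<otimes>\<^bsub>Hm\<^esub> g') = act h g \<otimes>\<^bsub>Hm\<^esub> act h g')"

definition QD_one :: "('a,'c) monoid_scheme \<Rightarrow> ('b,'d) monoid_scheme \<Rightarrow> 'a \<Rightarrow> 'b \<Rightarrow> complex" where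
  "QD_one Hm Hel g h = (if g \<in> carrier Hm \<and> h = \<one>\<^bsub>Hel\<^esub> then 1 else 0)"

definition QD_grp :: "('a,'c) monoid_scheme \<Rightarrow> ('b,'d) monoid_scheme \<Rightarrow> 'b \<Rightarrow> 'a \<Rightarrow> 'b \<Rightarrow> complex" where
  "QD_grp Hm Hel h0 g h = (if g \<in> carrier Hm \<and> h = h0 then 1 else 0)"

(* coproduct Delta(P_g h) = sum_{g'} P_{g'} h (x) P_{g'^-1 g} h, in the basis of A (x) A:
   coefficient of (P_g1 h1) (x) (P_g2 h2) *)
definition QD_coprod :: "('a,'c) monoid_scheme \<Rightarrow> ('b,'d) monoid_scheme \<Rightarrow> ('a \<Rightarrow> 'b \<Rightarrow> complex)
    \<Rightarrow> 'a \<Rightarrow> 'b \<Rightarrow> 'a \<Rightarrow> 'b \<Rightarrow> complex" where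
  "QD_coprod Hm Hel f g1 h1 g2 h2 =
     (if g1 \<in> carrier Hm \<and> g2 \<in> carrier Hm \<and> h1 \<in> carrier Hel \<and> h1 = h2
      then f (g1 \<otimes>\<^bsub>Hm\<^esub> g2) h1 else 0)"

(* carrier space of Pi^e_alpha: phi : Hel -> V_alpha = complex^'n with
   phi(x n) = alpha(n^-1) phi(x); phi is taken to be 0 outside carrier Hel *)
definition elec_space :: "('b,'d) monoid_scheme \<Rightarrow> ('b \<Rightarrow> complex^'n^'n) \<Rightarrow> ('b \<Rightarrow> complex^'n) set" where
  "elec_space Hel alpha = {phi. (\<forall>x. x \<notin> carrier Hel \<longrightarrow> phi x = 0) \<and>
      (\<forall>x\<in>carrier Hel. \<forall>n\<in>carrier Hel. phi (x \<otimes>\<^bsub>Hel\<^esub> n) = alpha (inv\<^bsub>Hel\<^esub> n) *v phi x)}"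

definition Pi_e :: "('a,'c) monoid_scheme \<Rightarrow> ('b,'d) monoid_scheme \<Rightarrow> ('a \<Rightarrow> 'b \<Rightarrow> complex)
    \<Rightarrow> ('b \<Rightarrow> complex^'n) \<Rightarrow> 'b \<Rightarrow> complex^'n" where
  "Pi_e Hm Hel f phi x = (if x \<in> carrier Hel then
      (\<Sum>z\<in>carrier Hel. f \<one>\<^bsub>Hm\<^esub> z *s phi (inv\<^bsub>Hel\<^esub> z \<otimes>\<^bsub>Hel\<^esub> x)) else 0)"

definition csubspace_vec :: "(complex^'n) set \<Rightarrow> bool" where
  "csubspace_vec W \<longleftrightarrow> 0 \<in> W \<and> (\<forall>x\<in>W. \<forall>y\<in>W. x + y \<in> W) \<and> (\<forall>c. \<forall>x\<in>W. c *s x \<in> W)"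

definition is_rep :: "('b,'d) monoid_scheme \<Rightarrow> ('b \<Rightarrow> complex^'n^'n) \<Rightarrow> bool" where
  "is_rep Hel alpha \<longleftrightarrow> alpha \<one>\<^bsub>Hel\<^esub> = mat 1 \<and>
     (\<forall>h\<in>carrier Hel. \<forall>h'\<in>carrier Hel. alpha (h \<otimes>\<^bsub>Hel\<^esub> h') = alpha h ** alpha h')"

definition is_irrep :: "('b,'d) monoid_scheme \<Rightarrow> ('b \<Rightarrow> complex^'n^'n) \<Rightarrow> bool" where
  "is_irrep Hel alpha \<longleftrightarrow> is_rep Hel alpha \<and>
     (\<forall>W. csubspace_vec W \<and> (\<forall>h\<in>carrier Hel. \<forall>w\<in>W. alpha h *v w \<in> W)
          \<longrightarrow> W = {0} \<or> W = UNIV)"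

(* Element of A (x) End(W) (coefficients X g h of P_g h) acting on an element of A (x) W
   (coefficients Y g h): (P_g h (x) T)(P_g' h' (x) w) = delta_{g, h.g'} P_g (h h') (x) T w *)
definition QD_tensor_act :: "('a,'c) monoid_scheme \<Rightarrow> ('b,'d) monoid_scheme \<Rightarrow> ('b \<Rightarrow> 'a \<Rightarrow> 'a)
   \<Rightarrow> ('a \<Rightarrow> 'b \<Rightarrow> ('b \<Rightarrow> complex^'n) \<Rightarrow> ('b \<Rightarrow> complex^'n))
   \<Rightarrow> ('a \<Rightarrow> 'b \<Rightarrow> ('b \<Rightarrow> complex^'n)) \<Rightarrow> 'a \<Rightarrow> 'b \<Rightarrow> ('b \<Rightarrow> complex^'n)" where
  "QD_tensor_act Hm Hel act X Y g k =
     (if g \<in> carrier Hm \<and> k \<in> carrier Hel then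
        (\<lambda>x. \<Sum>h\<in>carrier Hel. X g h (Y (act (inv\<^bsub>Hel\<^esub> h) g) (inv\<^bsub>Hel\<^esub> h \<otimes>\<^bsub>Hel\<^esub> k)) x)
      else (\<lambda>_. 0))"

definition id_tensor_Pi :: "('a,'c) monoid_scheme \<Rightarrow> ('b,'d) monoid_scheme
   \<Rightarrow> ('a \<Rightarrow> 'b \<Rightarrow> 'a \<Rightarrow> 'b \<Rightarrow> complex) \<Rightarrow> 'a \<Rightarrow> 'b \<Rightarrow> ('b \<Rightarrow> complex^'n) \<Rightarrow> ('b \<Rightarrow> complex^'n)" where
  "id_tensor_Pi Hm Hel D g h = Pi_e Hm Hel (D g h)"

definition QD_tensor_vec :: "('a \<Rightarrow> 'b \<Rightarrow> complex) \<Rightarrow> ('b \<Rightarrow> complex^'n) \<Rightarrow> 'a \<Rightarrow> 'b \<Rightarrow> ('b \<Rightarrow> complex^'n)" where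
  "QD_tensor_vec a phi g h = (\<lambda>x. a g h *s phi x)"

definition T_r :: "('a,'c) monoid_scheme \<Rightarrow> ('b,'d) monoid_scheme \<Rightarrow> ('b \<Rightarrow> 'a \<Rightarrow> 'a)
   \<Rightarrow> ('b \<Rightarrow> complex^'n) \<Rightarrow> ('a \<Rightarrow> 'b \<Rightarrow> complex) set" where
  "T_r Hm Hel act phi = {a \<in> QD_elems Hm Hel.
     \<forall>g\<in>carrier Hm. \<forall>h\<in>carrier Hel.
       QD_tensor_act Hm Hel act (id_tensor_Pi Hm Hel (QD_coprod Hm Hel a))
          (QD_tensor_vec (QD_one Hm Hel) phi) g h
       = QD_tensor_vec a phi g h}"

definition N_phi :: "('a,'c) monoid_scheme \<Rightarrow> ('b,'d) monoid_scheme \<Rightarrow> ('b \<Rightarrow> complex^'n) \<Rightarrow> 'b set" where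
  "N_phi Hm Hel phi = {h \<in> carrier Hel. Pi_e Hm Hel (QD_grp Hm Hel h) phi = phi}"

end

theory Submission
  imports Defs
begin

text \<open>
  Under the electric representation the element \<open>P\<^sub>g h\<close> acts as \<open>\<delta>\<^sub>g\<^sub>,\<^sub>e\<close> times left
  translation by \<open>h\<close>. Hence \<open>(id \<otimes> \<Pi>\<^sup>e\<^sub>\<alpha>) \<Delta>(a)\<close> has \<open>(g, h)\<close>-component \<open>a(g, h)\<close>
  times translation by \<open>h\<close>, and multiplying it onto \<open>1 \<otimes> \<phi>\<close> gives
  the element with \<open>(g, h)\<close>-component \<open>a(g, h) (h \<cdot> \<phi>)\<close>. This equals \<open>a \<otimes> \<phi>\<close> iff each
  \<open>a(g, h)\<close> vanishes or \<open>h\<close> fixes \<open>\<phi>\<close>, i.e. iff \<open>a\<close> is supported on \<open>H\<^sub>m \<times> N\<^sub>\<phi>\<close>.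
\<close>

definition left_translate :: "('b, 'd) monoid_scheme \<Rightarrow> 'b \<Rightarrow> ('b \<Rightarrow> 'v::zero) \<Rightarrow> 'b \<Rightarrow> 'v" where
  "left_translate G h psi x = (if x \<in> carrier G then psi (inv\<^bsub>G\<^esub> h \<otimes>\<^bsub>G\<^esub> x) else 0)"

lemma Pi_e_concentrated:
  assumes "finite (carrier Hel)" and "h \<in> carrier Hel"
    and "\<And>z. z \<in> carrier Hel \<Longrightarrow> z \<noteq> h \<Longrightarrow> f \<one>\<^bsub>Hm\<^esub> z = 0"
  shows "Pi_e Hm Hel f psi = (\<lambda>x. f \<one>\<^bsub>Hm\<^esub> h *s left_translate Hel h psi x)"
proof
  fix x
  have "(\<Sum>z\<in>carrier Hel. f \<one>\<^bsub>Hm\<^esub> z *s psi (inv\<^bsub>Hel\<^esub> z \<otimes>\<^bsub>Hel\<^esub> x))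
      = (\<Sum>z\<in>carrier Hel. if z = h then f \<one>\<^bsub>Hm\<^esub> h *s psi (inv\<^bsub>Hel\<^esub> h \<otimes>\<^bsub>Hel\<^esub> x) else 0)"
    using assms(3) by (intro sum.cong) auto
  also have "\<dots> = f \<one>\<^bsub>Hm\<^esub> h *s psi (inv\<^bsub>Hel\<^esub> h \<otimes>\<^bsub>Hel\<^esub> x)"
    using assms(1,2) by (simp add: sum.delta')
  finally show "Pi_e Hm Hel f psi x = f \<one>\<^bsub>Hm\<^esub> h *s left_translate Hel h psi x"
    by (simp add: Pi_e_def left_translate_def)
qed

lemma Pi_e_QD_grp:
  assumes "monoid Hm" and "finite (carrier Hel)" and "h \<in> carrier Hel"
  shows "Pi_e Hm Hel (QD_grp Hm Hel h) psi = left_translate Hel h psi"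
  using Pi_e_concentrated[where Hm = Hm and f = "QD_grp Hm Hel h", OF assms(2,3)] assms(1)
  by (simp add: QD_grp_def monoid.one_closed)

lemma id_tensor_Pi_QD_coprod:
  assumes "monoid Hm" and "finite (carrier Hel)" and "g \<in> carrier Hm" and "h \<in> carrier Hel"
  shows "id_tensor_Pi Hm Hel (QD_coprod Hm Hel a) g h psi
    = (\<lambda>x. a g h *s left_translate Hel h psi x)"
  using Pi_e_concentrated[where Hm = Hm and f = "QD_coprod Hm Hel a g h", OF assms(2,4)] assms
  by (simp add: id_tensor_Pi_def QD_coprod_def monoid.one_closed monoid.r_one)

lemma N_phi_eq_fixed_by_translation:
  assumes "monoid Hm" and "finite (carrier Hel)"
  shows "N_phi Hm Hel psi = {h \<in> carrier Hel. left_translate Hel h psi = psi}"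
  unfolding N_phi_def by (intro Collect_cong conj_cong refl) (simp add: Pi_e_QD_grp[OF assms])

lemma QD_tensor_act_one_tensor:
  assumes "group Hel" and "finite (carrier Hel)" and "is_aut_action Hm Hel act"
    and "g \<in> carrier Hm" and "k \<in> carrier Hel"
    and "\<And>h. h \<in> carrier Hel \<Longrightarrow> X g h (\<lambda>_. 0) = (\<lambda>_. 0)"
  shows "QD_tensor_act Hm Hel act X (QD_tensor_vec (QD_one Hm Hel) psi) g k = X g k psi"
proof
  fix x
  have unit_coeff: "QD_tensor_vec (QD_one Hm Hel) psi (act (inv\<^bsub>Hel\<^esub> h) g) (inv\<^bsub>Hel\<^esub> h \<otimes>\<^bsub>Hel\<^esub> k)
      = (if h = k then psi else (\<lambda>_. 0))" if h: "h \<in> carrier Hel" for h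
  proof -
    have "act (inv\<^bsub>Hel\<^esub> h) g \<in> carrier Hm"
      using assms h by (simp add: is_aut_action_def group.inv_closed)
    moreover have "inv\<^bsub>Hel\<^esub> h \<otimes>\<^bsub>Hel\<^esub> k = \<one>\<^bsub>Hel\<^esub> \<longleftrightarrow> h = k"
      using assms h by (metis group.inv_closed group.inv_inv group.inv_equality group.l_inv)
    ultimately show ?thesis by (auto simp: QD_tensor_vec_def QD_one_def)
  qed
  have "(\<Sum>h\<in>carrier Hel. X g h (QD_tensor_vec (QD_one Hm Hel) psi
            (act (inv\<^bsub>Hel\<^esub> h) g) (inv\<^bsub>Hel\<^esub> h \<otimes>\<^bsub>Hel\<^esub> k)) x)
      = (\<Sum>h\<in>carrier Hel. if h = k then X g k psi x else 0)"
    using assms(6) unit_coeff by (intro sum.cong) auto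
  also have "\<dots> = X g k psi x"
    using assms(2,5) by (simp add: sum.delta')
  finally show "QD_tensor_act Hm Hel act X (QD_tensor_vec (QD_one Hm Hel) psi) g k x = X g k psi x"
    using assms(4,5) by (simp add: QD_tensor_act_def)
qed

lemma scale_fun_eq_iff:
  "(\<lambda>x. c *s u x) = (\<lambda>x. c *s (v x :: complex^'n)) \<longleftrightarrow> c = 0 \<or> u = v"
  by (auto simp: fun_eq_iff vector_mul_lcancel)

theorem mainTheorem6:
  fixes Hm :: "('a,'c) monoid_scheme" and Hel :: "('b,'d) monoid_scheme"
    and act :: "'b \<Rightarrow> 'a \<Rightarrow> 'a"
    and alpha :: "'b \<Rightarrow> complex^'n^'n"
    and phi :: "'b \<Rightarrow> complex^'n"
  assumes "group Hm" and "group Hel"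
    and "finite (carrier Hm)" and "finite (carrier Hel)"
    and "is_aut_action Hm Hel act"
    and "is_irrep Hel alpha"
    and "phi \<in> elec_space Hel alpha"
  shows "T_r Hm Hel act phi =
    {f \<in> QD_elems Hm Hel. \<forall>x1\<in>carrier Hm. \<forall>y1\<in>carrier Hel.
        y1 \<notin> N_phi Hm Hel phi \<longrightarrow> f x1 y1 = 0}"
proof -
  note Hm_monoid = group.is_monoid[OF assms(1)]
  have component: "QD_tensor_act Hm Hel act (id_tensor_Pi Hm Hel (QD_coprod Hm Hel a))
        (QD_tensor_vec (QD_one Hm Hel) phi) g k = QD_tensor_vec a phi g k
      \<longleftrightarrow> (k \<notin> N_phi Hm Hel phi \<longrightarrow> a g k = 0)"
    if g: "g \<in> carrier Hm" and k: "k \<in> carrier Hel" for a g k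
  proof -
    have "QD_tensor_act Hm Hel act (id_tensor_Pi Hm Hel (QD_coprod Hm Hel a))
        (QD_tensor_vec (QD_one Hm Hel) phi) g k = id_tensor_Pi Hm Hel (QD_coprod Hm Hel a) g k phi"
      using assms(2,4,5) g k
      by (rule QD_tensor_act_one_tensor) (simp add: id_tensor_Pi_def Pi_e_def fun_eq_iff)
    also have "\<dots> = (\<lambda>x. a g k *s left_translate Hel k phi x)"
      using Hm_monoid assms(4) g k by (rule id_tensor_Pi_QD_coprod)
    finally show ?thesis
      using k by (simp add: QD_tensor_vec_def scale_fun_eq_iff
          N_phi_eq_fixed_by_translation[OF Hm_monoid assms(4)]) blast
  qed
  show ?thesis
    unfolding T_r_def using component by auto
qed

end
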